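(* Let $D$ be a delta-matroid on $[n,\overline{n}]$ and write $U_D(u,0)=a_n+a_{n-1}u+\dots+a_0u^n$. Then $(a_0,\dots,a_n)$ is the $f$-vector of a pure simplicial complex. In particular, $a_i\le a_{n-i}$ for all $i\le n/2$, and $a_0\le a_1\le\dots\le a_{\lfloor (n+1)/2\rfloor}$.
   Context: Let $[n,\overline{n}]=\{1,\dots,n,\overline{1},\dots,\overline{n}\}$ with involution $a\mapsto\overline{a}$; $\overline{S}=\{\overline{a}:a\in S\}$. A subset is admissible if it contains at most one of $i,\overline{i}$ for each $i$; $\operatorname{AdS}_n$ is the set of admissible subsets. In $\mathbb{R}^n$ set $e_{\overline{i}}=-e_i$, $e_S=\sum_{a\in S}e_a$. A delta-matroid $D$ on $[n,\overline{n}]$ is a nonempty collection $\mathcal{F}$ of admissible sets of size $n$ (feasible sets) such that $\operatorname{Conv}\{e_B:B\in\mathcal{F}\}$ has all edges parallel to some $e_i$ or $e_i\pm e_j$. Rank function: $g_D(S)=\max_{B\in\mathcal{F}}(|S\cap B|-|\overline{S}\cap B|)$. $U_D(u,v)=\sum_{S\in\operatorname{AdS}_n}u^{n-|S|}v^{(|S|-g_D(S))/2}$. The $f$-vector of a simplicial complex of dimension $n-1$ is $(f_{-1},f_0,\dots,f_{n-1})$, $f_i$ the number of $i$-dimensional faces (faces with $i+1$ vertices); a simplicial complex is pure if all its facets have the same dimension. *)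

theory Defs
  imports "HOL-Analysis.Analysis"
begin

text \<open>Ground set [n, nbar] is rendered as the type ('n \<times> bool) with n = CARD('n):
  (i, True) stands for i and (i, False) stands for its bar.\<close>

definition bar :: "('n \<times> bool) \<Rightarrow> ('n \<times> bool)" where
  "bar x = (fst x, \<not> snd x)"

definition admissible :: "('n \<times> bool) set \<Rightarrow> bool" where
  "admissible S \<longleftrightarrow> (\<forall>i. \<not> ((i, True) \<in> S \<and> (i, False) \<in> S))"

definition elt_vec :: "('n::finite \<times> bool) \<Rightarrow> real^'n" where
  "elt_vec x = (if snd x then axis (fst x) 1 else - axis (fst x) 1)"

definition set_vec :: "('n::finite \<times> bool) set \<Rightarrow> real^'n" where
  "set_vec S = (\<Sum>x\<in>S. elt_vec x)"

definition edge_dirs :: "(real^'n::finite) set" where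
  "edge_dirs = {axis i 1 | i. True} \<union> {axis i 1 + axis j 1 | i j. i \<noteq> j}
               \<union> {axis i 1 - axis j 1 | i j. i \<noteq> j}"

definition is_edge :: "(real^'n::finite) set \<Rightarrow> (real^'n) set \<Rightarrow> bool" where
  "is_edge E P \<longleftrightarrow> E face_of P \<and> aff_dim E = 1"

definition delta_matroid :: "('n::finite \<times> bool) set set \<Rightarrow> bool" where
  "delta_matroid \<F> \<longleftrightarrow> \<F> \<noteq> {} \<and>
     (\<forall>B\<in>\<F>. admissible B \<and> card B = CARD('n)) \<and>
     (\<forall>E. is_edge E (convex hull (set_vec ` \<F>)) \<longrightarrow>
        (\<exists>v\<in>edge_dirs. \<forall>x\<in>E. \<forall>y\<in>E. \<exists>c. x - y = c *\<^sub>R v))"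

definition dm_rank :: "('n::finite \<times> bool) set set \<Rightarrow> ('n \<times> bool) set \<Rightarrow> int" where
  "dm_rank \<F> S = Max ((\<lambda>B. int (card (S \<inter> B)) - int (card (bar ` S \<inter> B))) ` \<F>)"

text \<open>U_D(u,v); the exponent (|S| - g_D(S))/2 is an integer (it is always even),
  rendered with integer division.\<close>
definition U_D :: "('n::finite \<times> bool) set set \<Rightarrow> real \<Rightarrow> real \<Rightarrow> real" where
  "U_D \<F> u v = (\<Sum>S\<in>{S. admissible S}.
      u ^ (CARD('n) - card S) * v ^ nat ((int (card S) - dm_rank \<F> S) div 2))"

definition simplicial_complex :: "'a set set \<Rightarrow> bool" where
  "simplicial_complex K \<longleftrightarrow> finite K \<and> {} \<in> K \<and> (\<forall>F\<in>K. finite F) \<and>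
     (\<forall>F\<in>K. \<forall>G. G \<subseteq> F \<longrightarrow> G \<in> K)"

definition facet :: "'a set set \<Rightarrow> 'a set \<Rightarrow> bool" where
  "facet K F \<longleftrightarrow> F \<in> K \<and> \<not> (\<exists>G\<in>K. F \<subset> G)"

definition pure_complex :: "'a set set \<Rightarrow> bool" where
  "pure_complex K \<longleftrightarrow> (\<forall>F G. facet K F \<and> facet K G \<longrightarrow> card F = card G)"

text \<open>num_faces K k = number of faces with k vertices = f_(k-1).\<close>
definition num_faces :: "'a set set \<Rightarrow> nat \<Rightarrow> nat" where
  "num_faces K k = card {F\<in>K. card F = k}"

end

theory Submission
  imports Defs
begin

text \<open>A feasible set is admissible of size \<open>n\<close>, so it contains exactly one of \<open>i\<close>, \<open>i\<^sup>-\<close>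
  for each \<open>i\<close>. Hence \<open>g\<^sub>D(S) = |S|\<close> if \<open>S\<close> lies in a feasible set, while otherwise every
  feasible \<open>B\<close> misses some \<open>x \<in> S\<close> and contains its bar, so \<open>g\<^sub>D(S) \<le> |S| - 2\<close> and \<open>S\<close>
  contributes nothing to \<open>U\<^sub>D(u,0)\<close>. Thus \<open>a\<^sub>i\<close> counts the \<open>i\<close>-element subsets of feasible
  sets: the faces of a complex whose facets are the feasible sets. In it every \<open>i\<close>-element face
  lies in at least \<open>C(n-i, j-i)\<close> faces with \<open>j\<close> elements, each of which contains \<open>C(j, i)\<close>
  faces with \<open>i\<close> elements; since \<open>C(j, i) \<le> C(n-i, j-i)\<close> for \<open>i \<le> j\<close> and \<open>i + j \<le> n\<close>,
  double counting gives \<open>a\<^sub>i \<le> a\<^sub>j\<close>, which yields both inequalities.\<close>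

lemma num_faces_mono:
  fixes K :: "'a set set"
  assumes K: "simplicial_complex K"
    and extend: "\<And>A. A \<in> K \<Longrightarrow> \<exists>B\<in>K. A \<subseteq> B \<and> card B = n"
    and "i \<le> j" "i + j \<le> n"
  shows "num_faces K i \<le> num_faces K j"
proof -
  define Ki where "Ki = {A\<in>K. card A = i}"
  define Kj where "Kj = {C\<in>K. card C = j}"
  have fin: "finite Ki" "finite Kj" and fin_face: "\<And>A. A \<in> K \<Longrightarrow> finite A"
    using K by (auto simp: simplicial_complex_def Ki_def Kj_def)
  have down: "\<And>A B. B \<in> K \<Longrightarrow> A \<subseteq> B \<Longrightarrow> A \<in> K"
    using K by (auto simp: simplicial_complex_def)
  have count_below: "card {A\<in>Ki. A \<subseteq> C} = j choose i" if "C \<in> Kj" for C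
  proof -
    have "{A\<in>Ki. A \<subseteq> C} = {A. A \<subseteq> C \<and> card A = i}"
      using that down by (auto simp: Ki_def Kj_def)
    moreover have "C \<in> K" "card C = j"
      using that by (auto simp: Kj_def)
    ultimately show ?thesis
      using fin_face by (simp add: n_subsets)
  qed
  have count_above: "(n - i) choose (j - i) \<le> card {C\<in>Kj. A \<subseteq> C}" if A: "A \<in> Ki" for A
  proof -
    obtain B where B: "B \<in> K" "A \<subseteq> B" "card B = n"
      using extend A by (auto simp: Ki_def)
    have "finite B" "finite A" "card A = i"
      using B A fin_face by (auto simp: Ki_def)
    then have card_B_A: "card (B - A) = n - i"
      using B by (simp add: card_Diff_subset)
    have "(\<lambda>D. A \<union> D) ` {D. D \<subseteq> B - A \<and> card D = j - i} \<subseteq> {C\<in>Kj. A \<subseteq> C}"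
    proof safe
      fix D assume D: "D \<subseteq> B - A" "card D = j - i"
      then have "card (A \<union> D) = j"
        using \<open>finite A\<close> \<open>card A = i\<close> \<open>i \<le> j\<close> finite_subset[OF D(1)] \<open>finite B\<close>
        by (subst card_Un_disjoint) auto
      moreover have "A \<union> D \<in> K"
        using down B D by blast
      ultimately show "A \<union> D \<in> Kj" by (simp add: Kj_def)
    qed
    then have "card {D. D \<subseteq> B - A \<and> card D = j - i} \<le> card {C\<in>Kj. A \<subseteq> C}"
      using fin by (intro card_inj_on_le[where f = "\<lambda>D. A \<union> D"]) (auto intro: inj_onI)
    then show ?thesis
      using n_subsets[of "B - A" "j - i"] \<open>finite B\<close> card_B_A by simp
  qed
  have "card Ki * ((n - i) choose (j - i)) \<le> (\<Sum>A\<in>Ki. card {C\<in>Kj. A \<subseteq> C})"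
    using sum_mono[OF count_above] by (simp add: mult.commute)
  also have "\<dots> = (j choose i) * card Kj"
    using fin count_below by (intro sum_multicount) auto
  also have "j choose i = j choose (j - i)"
    using \<open>i \<le> j\<close> by (rule binomial_symmetric)
  also have "\<dots> \<le> (n - i) choose (j - i)"
    using assms(3,4) by (intro binomial_right_mono) simp
  finally have "card Ki * ((n - i) choose (j - i)) \<le> card Kj * ((n - i) choose (j - i))"
    by (simp add: mult.commute mult_right_mono)
  moreover have "(n - i) choose (j - i) > 0"
    using assms(3,4) by (intro zero_less_binomial) simp
  ultimately show ?thesis
    by (simp add: num_faces_def Ki_def Kj_def)
qed

lemma num_faces_le_complement:
  assumes "simplicial_complex K" "\<And>A. A \<in> K \<Longrightarrow> \<exists>B\<in>K. A \<subseteq> B \<and> card B = n"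
    and "2 * i \<le> n"
  shows "num_faces K i \<le> num_faces K (n - i)"
  using num_faces_mono[OF assms(1,2)] assms(3) by simp

lemma num_faces_mono_lower_half:
  assumes "simplicial_complex K" "\<And>A. A \<in> K \<Longrightarrow> \<exists>B\<in>K. A \<subseteq> B \<and> card B = n"
    and "i \<le> j" "j \<le> (n + 1) div 2"
  shows "num_faces K i \<le> num_faces K j"
proof (cases "i = j")
  case False
  then have "i + j \<le> n"
    using assms(3,4) by presburger
  then show ?thesis
    using num_faces_mono[OF assms(1,2,3)] by blast
qed simp

definition down_closure :: "'a set set \<Rightarrow> 'a set set" where
  "down_closure \<B> = {S. \<exists>B\<in>\<B>. S \<subseteq> B}"

lemma card_le_if_mem_down_closure:
  fixes S :: "'a::finite set"
  assumes "S \<in> down_closure \<B>" "\<And>B. B \<in> \<B> \<Longrightarrow> card B = n"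
  shows "card S \<le> n"
proof -
  obtain B where "B \<in> \<B>" "S \<subseteq> B"
    using assms(1) by (auto simp: down_closure_def)
  then show ?thesis
    using assms(2) card_mono[of B S] by simp
qed

lemma down_closure_extends:
  assumes "A \<in> down_closure \<B>" "\<And>B. B \<in> \<B> \<Longrightarrow> card B = n"
  shows "\<exists>B\<in>down_closure \<B>. A \<subseteq> B \<and> card B = n"
  using assms by (auto simp: down_closure_def)

lemma simplicial_complex_down_closure:
  assumes "finite \<B>" "\<B> \<noteq> {}" "\<And>B. B \<in> \<B> \<Longrightarrow> finite B"
  shows "simplicial_complex (down_closure \<B>)"
proof -
  have "down_closure \<B> = (\<Union>B\<in>\<B>. Pow B)"
    by (auto simp: down_closure_def)
  then have "finite (down_closure \<B>)"
    using assms by simp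
  then show ?thesis
    using assms by (auto simp: simplicial_complex_def down_closure_def intro: finite_subset)
qed

lemma facet_down_closure:
  assumes "facet (down_closure \<B>) S"
  shows "S \<in> \<B>"
proof -
  obtain B where "B \<in> \<B>" "S \<subseteq> B"
    using assms by (auto simp: facet_def down_closure_def)
  moreover have "B \<in> down_closure \<B>"
    using \<open>B \<in> \<B>\<close> by (auto simp: down_closure_def)
  ultimately show ?thesis
    using assms psubsetI unfolding facet_def by blast
qed

lemma pure_complex_down_closure:
  assumes "\<And>B. B \<in> \<B> \<Longrightarrow> card B = n"
  shows "pure_complex (down_closure \<B>)"
  unfolding pure_complex_def using assms facet_down_closure by metis

lemma simplicial_complex_image:
  assumes "inj f" "simplicial_complex K"
  shows "simplicial_complex (image f ` K)"
  unfolding simplicial_complex_def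
proof (intro conjI ballI allI impI)
  show "finite (image f ` K)" "{} \<in> image f ` K"
    using assms(2) by (auto simp: simplicial_complex_def)
  fix X G assume "X \<in> image f ` K" "G \<subseteq> X"
  then obtain S where S: "S \<in> K" "X = f ` S"
    by auto
  then have "G = f ` (S \<inter> f -` G)"
    using \<open>G \<subseteq> X\<close> by auto
  moreover have "S \<inter> f -` G \<in> K"
    using assms(2) S(1) by (auto simp: simplicial_complex_def)
  ultimately show "G \<in> image f ` K" by blast
next
  fix X assume "X \<in> image f ` K"
  then show "finite X"
    using assms(2) by (auto simp: simplicial_complex_def)
qed

lemma facet_image:
  assumes "inj f" "facet (image f ` K) (f ` S)" "S \<in> K"
  shows "facet K S"
proof -
  have "\<not> S \<subset> G" if "G \<in> K" for G
  proof -
    have "\<not> f ` S \<subset> f ` G"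
      using that assms(2) unfolding facet_def by blast
    then show ?thesis
      using assms(1) by (simp add: psubset_eq inj_image_subset_iff inj_image_eq_iff)
  qed
  then show ?thesis
    using assms(3) unfolding facet_def by blast
qed

lemma pure_complex_image:
  assumes "inj f" "pure_complex K"
  shows "pure_complex (image f ` K)"
  unfolding pure_complex_def
proof clarify
  fix X Y assume X: "facet (image f ` K) X" and Y: "facet (image f ` K) Y"
  then obtain S T where ST: "S \<in> K" "X = f ` S" "T \<in> K" "Y = f ` T"
    by (auto simp: facet_def)
  then have "facet K S" "facet K T"
    using facet_image[OF assms(1)] X Y by blast+
  then have "card S = card T"
    using assms(2) unfolding pure_complex_def by blast
  then show "card X = card Y"
    using ST(2,4) card_image[OF inj_on_subset[OF assms(1) subset_UNIV]] by simp
qed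

lemma num_faces_image:
  assumes "inj f"
  shows "num_faces (image f ` K) k = num_faces K k"
proof -
  have "{X\<in>image f ` K. card X = k} = image f ` {S\<in>K. card S = k}"
    using card_image[OF inj_on_subset[OF assms subset_UNIV]] by auto
  moreover have "inj_on (image f) {S\<in>K. card S = k}"
    by (meson assms inj_image_eq_iff inj_onI)
  ultimately show ?thesis
    by (simp add: num_faces_def card_image)
qed

lemma admissible_subset:
  assumes "admissible B" "S \<subseteq> B"
  shows "admissible S"
  using assms by (auto simp: admissible_def)

lemma full_admissible_meets_pair:
  fixes B :: "('n::finite \<times> bool) set"
  assumes "admissible B" "card B = CARD('n)"
  shows "(i, True) \<in> B \<or> (i, False) \<in> B"
proof -
  have "inj_on fst B"
    using assms(1) by (auto intro!: inj_onI simp: admissible_def) (metis prod.collapse)+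
  then have "fst ` B = UNIV"
    using assms(2) by (simp add: card_image card_eq_UNIV_imp_eq_UNIV)
  then obtain x where "x \<in> B" "fst x = i"
    by (metis UNIV_I imageE)
  then show ?thesis
    by (cases x; cases "snd x") auto
qed

lemma bar_mem_full_admissible:
  fixes B :: "('n::finite \<times> bool) set"
  assumes "admissible B" "card B = CARD('n)" "x \<notin> B"
  shows "bar x \<in> B"
  using full_admissible_meets_pair[OF assms(1,2), of "fst x"] assms(3)
  by (cases x; cases "snd x") (auto simp: bar_def)

lemma bar_not_mem_admissible:
  assumes "admissible B" "x \<in> B"
  shows "bar x \<notin> B"
  using assms by (cases x; cases "snd x") (auto simp: bar_def admissible_def)

lemma dm_rank_down_closure:
  fixes \<F> :: "('n::finite \<times> bool) set set"
  assumes adm: "\<And>B. B \<in> \<F> \<Longrightarrow> admissible B" and S: "S \<in> down_closure \<F>"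
  shows "dm_rank \<F> S = int (card S)"
proof -
  obtain B where B: "B \<in> \<F>" "S \<subseteq> B"
    using S by (auto simp: down_closure_def)
  have "bar ` S \<inter> B = {}"
    using bar_not_mem_admissible[OF adm[OF B(1)]] B(2) by blast
  then have attained: "int (card (S \<inter> B)) - int (card (bar ` S \<inter> B)) = int (card S)"
    using B(2) by (simp add: Int_absorb2)
  have "int (card (S \<inter> B')) - int (card (bar ` S \<inter> B')) \<le> int (card S)" for B'
    using card_mono[of S "S \<inter> B'"] by auto
  then show ?thesis
    unfolding dm_rank_def using B(1) attained
    by (intro antisym Max.boundedI Max_ge) (auto intro!: rev_image_eqI[of B])
qed

lemma dm_rank_not_down_closure:
  fixes \<F> :: "('n::finite \<times> bool) set set"
  assumes "\<F> \<noteq> {}" and full: "\<And>B. B \<in> \<F> \<Longrightarrow> admissible B \<and> card B = CARD('n)"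
    and S: "S \<notin> down_closure \<F>"
  shows "dm_rank \<F> S \<le> int (card S) - 2"
proof -
  have "int (card (S \<inter> B)) - int (card (bar ` S \<inter> B)) \<le> int (card S) - 2" if "B \<in> \<F>" for B
  proof -
    obtain x where x: "x \<in> S" "x \<notin> B"
      using S \<open>B \<in> \<F>\<close> unfolding down_closure_def by blast
    then have "bar x \<in> bar ` S \<inter> B"
      using bar_mem_full_admissible full[OF \<open>B \<in> \<F>\<close>] by blast
    then have "card (bar ` S \<inter> B) \<ge> 1"
      by (metis One_nat_def Suc_leI card_gt_0_iff emptyE finite)
    moreover have "card (S \<inter> B) < card S"
      using x by (intro psubset_card_mono) auto
    ultimately show ?thesis by linarith
  qed
  then show ?thesis
    unfolding dm_rank_def using \<open>\<F> \<noteq> {}\<close> by (intro Max.boundedI) auto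
qed

lemma U_D_at_zero:
  fixes \<F> :: "('n::finite \<times> bool) set set"
  assumes "\<F> \<noteq> {}" and full: "\<And>B. B \<in> \<F> \<Longrightarrow> admissible B \<and> card B = CARD('n)"
  shows "U_D \<F> u 0 = (\<Sum>i\<le>CARD('n). real (num_faces (down_closure \<F>) i) * u ^ (CARD('n) - i))"
proof -
  let ?n = "CARD('n)" and ?K = "down_closure \<F>"
  have adm_K: "?K \<subseteq> {S. admissible S}"
    using full admissible_subset by (auto simp: down_closure_def)
  have card_K: "card S \<le> ?n" if "S \<in> ?K" for S
    using that full card_le_if_mem_down_closure by blast
  have term_eq: "u ^ (?n - card S) * 0 ^ nat ((int (card S) - dm_rank \<F> S) div 2)
      = (if S \<in> ?K then u ^ (?n - card S) else 0)" for S
  proof (cases "S \<in> ?K")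
    case False
    then have "dm_rank \<F> S \<le> int (card S) - 2"
      using dm_rank_not_down_closure assms by blast
    then have "nat ((int (card S) - dm_rank \<F> S) div 2) \<noteq> 0"
      by linarith
    then show ?thesis
      using False by simp
  next
    case True
    then have "dm_rank \<F> S = int (card S)"
      using dm_rank_down_closure full by blast
    then show ?thesis
      using True by simp
  qed
  have "U_D \<F> u 0 = (\<Sum>S\<in>{S. admissible S}. if S \<in> ?K then u ^ (?n - card S) else 0)"
    unfolding U_D_def term_eq ..
  also have "\<dots> = (\<Sum>S\<in>?K. u ^ (?n - card S))"
    using adm_K by (simp add: sum.inter_filter[symmetric] Int_absorb1 Collect_conj_eq)
  also have "\<dots> = (\<Sum>i\<le>?n. \<Sum>S\<in>{S\<in>?K. card S = i}. u ^ (?n - card S))"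
    using card_K by (intro sum.group[symmetric]) auto
  also have "\<dots> = (\<Sum>i\<le>?n. real (num_faces ?K i) * u ^ (?n - i))"
    by (simp add: num_faces_def)
  finally show ?thesis .
qed

lemma reversed_polyfun_eq_coeffs:
  fixes c d :: "nat \<Rightarrow> 'a::{idom,real_normed_div_algebra}"
  assumes "\<And>x. (\<Sum>i\<le>n. c i * x ^ (n - i)) = (\<Sum>i\<le>n. d i * x ^ (n - i))" and "i \<le> n"
  shows "c i = d i"
proof -
  have reverse: "(\<Sum>i\<le>n. e i * x ^ (n - i)) = (\<Sum>k\<le>n. e (n - k) * x ^ k)" for e and x :: 'a
    by (rule sum.reindex_bij_witness[of _ "\<lambda>k. n - k" "\<lambda>i. n - i"]) auto
  have "\<forall>k\<le>n. c (n - k) = d (n - k)"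
    using assms(1) unfolding reverse polyfun_eq_coeffs[symmetric] by blast
  then show ?thesis
    using \<open>i \<le> n\<close> by (metis diff_diff_cancel diff_le_self)
qed

theorem corollary3p5:
  fixes \<F> :: "('n::finite \<times> bool) set set" and a :: "nat \<Rightarrow> real"
  assumes "delta_matroid \<F>"
    and "\<forall>u. U_D \<F> u 0 = (\<Sum>i\<le>CARD('n). a i * u ^ (CARD('n) - i))"
  shows "(\<exists>K :: nat set set. simplicial_complex K \<and> pure_complex K \<and>
            (\<forall>F\<in>K. card F \<le> CARD('n)) \<and>
            (\<forall>i\<le>CARD('n). real (num_faces K i) = a i))
         \<and> (\<forall>i. 2 * i \<le> CARD('n) \<longrightarrow> a i \<le> a (CARD('n) - i))
         \<and> (\<forall>i j. i \<le> j \<and> j \<le> (CARD('n) + 1) div 2 \<longrightarrow> a i \<le> a j)"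
proof -
  let ?n = "CARD('n)" and ?K = "down_closure \<F>"
  have ne: "\<F> \<noteq> {}" and full: "\<And>B. B \<in> \<F> \<Longrightarrow> admissible B \<and> card B = ?n"
    using assms(1) by (auto simp: delta_matroid_def)
  have K: "simplicial_complex ?K" "pure_complex ?K"
    and extend: "\<And>A. A \<in> ?K \<Longrightarrow> \<exists>B\<in>?K. A \<subseteq> B \<and> card B = ?n"
    using ne full by (auto intro: simplicial_complex_down_closure pure_complex_down_closure
        down_closure_extends)
  have coeffs: "(\<Sum>i\<le>?n. a i * u ^ (?n - i)) = (\<Sum>i\<le>?n. real (num_faces ?K i) * u ^ (?n - i))" for u
    by (simp only: assms(2)[rule_format, symmetric] U_D_at_zero[OF ne full])
  have a_eq: "a i = real (num_faces ?K i)" if "i \<le> ?n" for i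
    using reversed_polyfun_eq_coeffs[OF coeffs that] .
  define K' where "K' = image to_nat ` ?K"
  have "simplicial_complex K'" "pure_complex K'" "num_faces K' i = num_faces ?K i" for i
    using K by (simp_all add: K'_def simplicial_complex_image pure_complex_image num_faces_image)
  moreover have "card F \<le> ?n" if F: "F \<in> K'" for F
  proof -
    obtain S where "S \<in> ?K" "F = to_nat ` S"
      using F unfolding K'_def by blast
    moreover have "card S \<le> ?n"
      using \<open>S \<in> ?K\<close> full card_le_if_mem_down_closure by blast
    ultimately show ?thesis
      by (simp add: card_image)
  qed
  moreover have "a i \<le> a (?n - i)" if "2 * i \<le> ?n" for i
    using num_faces_le_complement[OF K(1) extend that] a_eq that by simp
  moreover have "a i \<le> a j" if "i \<le> j" "j \<le> (?n + 1) div 2" for i j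
  proof -
    have "i \<le> ?n" "j \<le> ?n"
      using that by presburger+
    then show ?thesis
      using num_faces_mono_lower_half[OF K(1) extend that] a_eq by simp
  qed
  ultimately show ?thesis
    using a_eq by auto
qed

end
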